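(* Let $s=\sigma+i\rho\in\mathbb{C}$ with $\sigma>1$ and let $c\in\mathbb{R}$ with $0<c<1$. Then $$\zeta(s)=\frac{i}{2}\int_{c-i\infty}^{c+i\infty} t^{-s}\cot(\pi t)\,dt=-\frac{1}{2}\int_{-\infty}^{\infty}(c+it)^{-s}\cot\big(\pi(c+it)\big)\,dt .$$
   Context: $\zeta(s)=\sum_{k\ge1}k^{-s}$ for $\sigma>1$ is the Riemann zeta function. Powers $t^{-s}$ with $\operatorname{Re} t>0$ use the principal branch of the logarithm; the first integral is along the vertical line $\operatorname{Re} t=c$ traversed upward. *)

theory Defs
  imports "HOL-Analysis.Analysis"
begin

text \<open>Riemann zeta function for Re s > 1, as the Dirichlet series sum over k >= 1 of k^(-s).
  Complex powers use the principal branch of the logarithm (powr on complex).\<close>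
definition riemann_zeta :: "complex \<Rightarrow> complex" where
  "riemann_zeta s = (\<Sum>k. 1 / (of_nat (Suc k)) powr s)"

text \<open>Integral along the vertical line Re t = c, traversed upward:
  parametrise t = c + i y, dt = i dy.\<close>
definition vertical_line_integral :: "real \<Rightarrow> (complex \<Rightarrow> complex) \<Rightarrow> complex" where
  "vertical_line_integral c f = \<i> * integral UNIV (\<lambda>y::real. f (Complex c y))"

end

theory Submission
  imports Defs "HOL-Complex_Analysis.Complex_Analysis"
begin

text \<open>The kernel \<open>t powr (-s) * cot (pi * t)\<close> is holomorphic on \<open>Re t > 0\<close> except for simple
  poles at the positive integers \<open>n\<close>, with residues \<open>n powr (-s) / pi\<close>. Integrating it around the
  rectangle with vertical sides \<open>Re t = c\<close>, \<open>Re t = c + N\<close> and horizontal sides \<open>Im t = \<plusminus>T\<close>,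
  the horizontal sides vanish as \<open>T \<rightarrow> \<infinity>\<close>: there \<open>cot (pi * t)\<close> is bounded while
  \<open>|t powr (-s)| \<le> exp (pi * |Im s| / 2) * |t| powr (- Re s)\<close>. So the integral along \<open>Re t = c\<close>
  is the one along \<open>Re t = c + N\<close> minus \<open>2 * (\<Sum>n\<le>N. n powr (-s))\<close>. On every line
  \<open>Re t = c + N\<close> one has \<open>|cot (pi * t)| \<le> 1 / sin (pi * c)\<close>, giving a majorant independent of
  \<open>N\<close>, so by dominated convergence the shifted integral tends to \<open>0\<close> as \<open>N \<rightarrow> \<infinity>\<close>.\<close>

lemma norm_sin_squared_Re_Im:
  "norm (sin z) ^ 2 = sin (Re z) ^ 2 + (exp (Im z) - inverse (exp (Im z))) ^ 2 / 4"
proof -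
  have "norm (sin z) ^ 2 = norm (cos (of_real (pi/2) - z)) ^ 2" by (simp add: cos_diff)
  also have "\<dots> = sin (Re z) ^ 2 + (exp (- Im z) - inverse (exp (- Im z))) ^ 2 / 4"
    by (simp only: norm_cos_squared) (simp add: cos_diff)
  also have "(exp (- Im z) - inverse (exp (- Im z))) ^ 2 = (exp (Im z) - inverse (exp (Im z))) ^ 2"
    by (simp add: exp_minus power2_commute)
  finally show ?thesis .
qed

lemma norm_cot_le_inverse_abs_sin_Re:
  assumes "sin (Re z) \<noteq> 0"
  shows "norm (cot z) \<le> 1 / \<bar>sin (Re z)\<bar>"
proof -
  define S where "S = (exp (Im z) - inverse (exp (Im z))) ^ 2 / 4"
  define a where "a = sin (Re z) ^ 2"
  have a: "0 < a" "a \<le> 1" using assms by (auto simp: a_def abs_square_le_1)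
  have S: "0 \<le> S" by (simp add: S_def)
  have "norm (cot z) ^ 2 = (1 - a + S) / (a + S)"
    by (simp add: cot_def norm_divide power_divide norm_cos_squared norm_sin_squared_Re_Im
        S_def a_def cos_squared_eq)
  also have "\<dots> \<le> 1 / a"
  proof -
    have "a * S \<le> S" using a S by (simp add: mult_left_le_one_le)
    moreover have "a * (1 - a + S) = a + a * S - a * a" by (simp add: algebra_simps)
    moreover have "0 \<le> a * a" by simp
    ultimately have "a * (1 - a + S) \<le> a + S" by linarith
    then show ?thesis using a S by (simp add: divide_le_eq le_divide_eq mult.commute)
  qed
  also have "\<dots> = (1 / \<bar>sin (Re z)\<bar>) ^ 2" by (simp add: a_def power_divide)
  finally show ?thesis by (rule power2_le_imp_le) simp
qed

lemma norm_cot_le_2: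
  assumes "1 \<le> \<bar>Im z\<bar>"
  shows "norm (cot z) \<le> 2"
proof -
  define S where "S = (exp (Im z) - inverse (exp (Im z))) ^ 2 / 4"
  have "1 \<le> \<bar>(exp (Im z) - inverse (exp (Im z))) / 2\<bar>"
    using real_le_abs_sinh[of "Im z"] assms by linarith
  then have "1 \<le> \<bar>(exp (Im z) - inverse (exp (Im z))) / 2\<bar> ^ 2"
    by (rule one_le_power)
  then have S: "1 \<le> S" by (simp add: S_def power_divide del: power_abs)
  have "norm (cot z) ^ 2 = (cos (Re z) ^ 2 + S) / (sin (Re z) ^ 2 + S)"
    by (simp add: cot_def norm_divide power_divide norm_cos_squared norm_sin_squared_Re_Im S_def)
  also have "\<dots> \<le> 2 ^ 2"
  proof -
    have "cos (Re z) ^ 2 + S \<le> 1 + S" by (simp add: abs_square_le_1)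
    also have "\<dots> \<le> 4 * S" using S by simp
    also have "\<dots> \<le> 4 * (sin (Re z) ^ 2 + S)" by simp
    finally have "cos (Re z) ^ 2 + S \<le> 4 * (sin (Re z) ^ 2 + S)" .
    moreover have "0 < sin (Re z) ^ 2 + S" using S by (simp add: add_nonneg_pos)
    ultimately show ?thesis by (simp add: divide_le_eq)
  qed
  finally show ?thesis by (rule power2_le_imp_le) simp
qed

lemma norm_powr_le_Re_pos:
  fixes z w :: complex
  assumes "0 < Re z"
  shows "norm (z powr w) \<le> exp (pi/2 * \<bar>Im w\<bar>) * norm z powr Re w"
proof -
  have "\<bar>Arg z\<bar> < pi/2" using assms Arg_Re_pos by blast
  have "- Im w * Arg z \<le> \<bar>Im w\<bar> * \<bar>Arg z\<bar>"
    by (metis abs_ge_self abs_minus_cancel abs_mult mult_minus_left)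
  also have "\<dots> \<le> \<bar>Im w\<bar> * (pi/2)"
    using \<open>\<bar>Arg z\<bar> < pi/2\<close> by (intro mult_left_mono) auto
  finally have "- Im w * Arg z \<le> pi/2 * \<bar>Im w\<bar>" by (simp add: mult.commute)
  then show ?thesis
    unfolding norm_powr_complex by (subst mult.commute) (intro mult_left_mono; simp)
qed

lemma abs_sin_add_nat_times_pi: "\<bar>sin (x + real n * pi)\<bar> = \<bar>sin x\<bar>"
proof (induction n)
  case (Suc n)
  have "sin (x + real (Suc n) * pi) = sin ((x + real n * pi) + pi)" by (simp add: algebra_simps)
  also have "\<dots> = - sin (x + real n * pi)" by (rule sin_periodic_pi)
  finally have "sin (x + real (Suc n) * pi) = - sin (x + real n * pi)" .
  with Suc show ?case by simp
qed simp

lemma add_of_nat_notin_Ints: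
  assumes "0 < c" "c < 1"
  shows "c + real n \<notin> \<int>"
proof
  assume "c + real n \<in> \<int>"
  then have "c \<in> \<int>" using Ints_diff[of "c + real n" "real n"] by simp
  then obtain m :: int where "c = of_int m" by (auto elim: Ints_cases)
  with assms show False by simp
qed

lemma Complex_notin_Ints: "x \<notin> \<int> \<Longrightarrow> Complex x y \<notin> \<int>"
  by (auto elim!: Ints_cases simp: complex_eq_iff)

lemma max_abs_powr_integrable:
  fixes a e :: real
  assumes "0 < a" "e < -1"
  shows "(\<lambda>y. max a \<bar>y\<bar> powr e) integrable_on UNIV"
proof -
  define h where "h y = max a \<bar>y\<bar> powr e" for y :: real
  have "(\<lambda>y. y powr e) integrable_on {a..}"
    using has_integral_powr_to_inf[OF assms(2,1)] by blast
  then have h_right: "h integrable_on {a..}"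
    by (rule integrable_eq) (use assms(1) in \<open>auto simp: h_def max_def\<close>)
  then have h_right_abs: "h absolutely_integrable_on {a..}"
    by (rule nonnegative_absolutely_integrable_1) (simp add: h_def)
  have "h absolutely_integrable_on {..-a}"
  proof -
    have "(\<lambda>y. h (-y)) absolutely_integrable_on {a..} \<and> integral {a..} (\<lambda>y. h (-y)) = integral {a..} h
          \<longleftrightarrow> h absolutely_integrable_on {..-a} \<and> integral {..-a} h = integral {a..} h"
      by (rule has_absolute_integral_reflect_real) (auto simp: image_iff intro!: bexI[of _ "- _"])
    moreover have "(\<lambda>y. h (-y)) = h" by (simp add: h_def fun_eq_iff)
    ultimately show ?thesis using h_right_abs by simp
  qed
  then have left: "h integrable_on {..-a}"
    using set_lebesgue_integral_eq_integral(1) by blast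
  have middle: "h integrable_on {-a..a}"
  proof -
    have "(\<lambda>y. a powr e) integrable_on {-a..a}"
      by (intro integrable_continuous_real continuous_intros)
    then show ?thesis by (rule integrable_eq) (simp add: h_def max_absorb1 abs_le_iff)
  qed
  have h_left_middle: "h integrable_on ({..-a} \<union> {-a..a})"
    by (rule integrable_Un[OF _ left middle]) (auto intro: negligible_subset[of "{-a}"])
  have "h integrable_on ({..-a} \<union> {-a..a} \<union> {a..})"
    by (rule integrable_Un[OF _ h_left_middle h_right])
      (use assms(1) in \<open>auto intro: negligible_subset[of "{a}"]\<close>)
  moreover have "{..-a} \<union> {-a..a} \<union> {a..} = (UNIV :: real set)" by auto
  ultimately show ?thesis by (simp add: h_def[abs_def])
qed

lemma dominated_integral_symmetric_intervals_tendsto: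
  fixes G :: "real \<Rightarrow> 'a :: euclidean_space" and H :: "real \<Rightarrow> real"
  assumes "continuous_on UNIV G" "H integrable_on UNIV" "\<And>y. norm (G y) \<le> H y"
  shows "G integrable_on UNIV" "(\<lambda>m. integral {-real m..real m} G) \<longlonglongrightarrow> integral UNIV G"
proof -
  define f where "f m y = (if y \<in> {-real m..real m} then G y else 0)" for m y
  have "f m integrable_on UNIV" for m
    unfolding f_def integrable_restrict_UNIV
    by (intro integrable_continuous_real continuous_on_subset[OF assms(1)]) auto
  moreover have "norm (f m y) \<le> H y" for m y
    using assms(3)[of y] order_trans[OF norm_ge_zero assms(3)] by (auto simp: f_def)
  moreover have "(\<lambda>m. f m y) \<longlonglongrightarrow> G y" for y
  proof (rule tendsto_eventually)
    obtain M :: nat where "\<bar>y\<bar> \<le> real M" using real_arch_simple by blast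
    then show "\<forall>\<^sub>F m in sequentially. f m y = G y"
      unfolding eventually_sequentially by (intro exI[of _ M]) (auto simp: f_def)
  qed
  ultimately have "G integrable_on UNIV" "(\<lambda>m. integral UNIV (f m)) \<longlonglongrightarrow> integral UNIV G"
    using dominated_convergence[OF _ assms(2)] by blast+
  moreover have "integral UNIV (f m) = integral {-real m..real m} G" for m
    unfolding f_def by (rule integral_restrict_UNIV)
  ultimately show "G integrable_on UNIV" "(\<lambda>m. integral {-real m..real m} G) \<longlonglongrightarrow> integral UNIV G"
    by simp_all
qed

definition zeta_kernel :: "complex \<Rightarrow> complex \<Rightarrow> complex" where
  "zeta_kernel s t = t powr (-s) * cot (of_real pi * t)"

lemma sin_pi_times_eq_0_iff: "sin (of_real pi * z :: complex) = 0 \<longleftrightarrow> z \<in> \<int>"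
proof
  assume "sin (of_real pi * z) = 0"
  then obtain n :: int where "of_real pi * z = of_real (of_int n * pi)"
    using sin_eq_0[of "of_real pi * z"] by blast
  then have "z = of_int n" by (simp add: field_simps)
  then show "z \<in> \<int>" by simp
next
  assume "z \<in> \<int>"
  then obtain n where "z = of_int n" by (auto elim: Ints_cases)
  then show "sin (of_real pi * z) = 0" by (auto simp: sin_eq_0 mult.commute intro!: exI[of _ n])
qed

lemma holomorphic_zeta_kernel: "zeta_kernel s holomorphic_on {t. 0 < Re t} - \<int>"
proof -
  have "(\<lambda>t. t powr (-s) * (cos (of_real pi * t) / sin (of_real pi * t))) holomorphic_on {t. 0 < Re t} - \<int>"
    by (intro holomorphic_intros) (auto simp: sin_pi_times_eq_0_iff complex_nonpos_Reals_iff)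
  then show ?thesis by (simp add: zeta_kernel_def[abs_def] cot_def)
qed

lemma open_Re_pos_minus_Ints: "open ({t. 0 < Re t} - \<int>)"
  by (intro open_Diff closed_Ints open_halfspace_Re_gt)

lemma contour_integrable_zeta_kernel_linepath:
  assumes "closed_segment a b \<subseteq> {t. 0 < Re t} - \<int>"
  shows "zeta_kernel s contour_integrable_on linepath a b"
  using contour_integrable_holomorphic_simple[OF holomorphic_zeta_kernel open_Re_pos_minus_Ints
      valid_path_linepath] assms by simp

lemma contour_integrable_zeta_kernel_vertical_segment:
  assumes "0 < x" "x \<notin> \<int>" "Re a = x" "Re b = x"
  shows "zeta_kernel s contour_integrable_on linepath a b"
proof (rule contour_integrable_zeta_kernel_linepath, rule subsetI)
  fix z assume "z \<in> closed_segment a b"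
  then have "Re z = x" using assms by (auto simp: closed_segment_same_Re)
  with assms(1,2) show "z \<in> {t. 0 < Re t} - \<int>" by (auto elim!: Ints_cases)
qed

lemma continuous_on_zeta_kernel_vertical:
  assumes "0 < x" "x \<notin> \<int>"
  shows "continuous_on UNIV (\<lambda>y. zeta_kernel s (Complex x y))"
proof -
  have "continuous_on ({t. 0 < Re t} - \<int>) (zeta_kernel s)"
    using holomorphic_zeta_kernel holomorphic_on_imp_continuous_on by blast
  moreover have "continuous_on UNIV (Complex x)"
    unfolding Complex_eq by (intro continuous_intros)
  ultimately show ?thesis
    by (rule continuous_on_compose2) (use assms Complex_notin_Ints in auto)
qed

lemma residue_zeta_kernel:
  assumes "n \<ge> 1"
  shows "residue (zeta_kernel s) (of_nat n) = of_nat n powr (-s) / pi"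
proof -
  define f where "f w = w powr (-s) * cos (of_real pi * w)" for w :: complex
  define g where "g w = sin (of_real pi * w)" for w :: complex
  have not_nonpos: "w \<notin> \<real>\<^sub>\<le>\<^sub>0" if "w \<in> ball (of_nat n) (1/2)" for w :: complex
  proof -
    have "\<bar>Re w - real n\<bar> \<le> norm (w - of_nat n)" using abs_Re_le_cmod[of "w - of_nat n"] by simp
    also have "\<dots> < 1/2" using that by (simp add: dist_norm norm_minus_commute)
    finally show ?thesis using assms by (auto simp: complex_nonpos_Reals_iff)
  qed
  have "f holomorphic_on ball (of_nat n) (1/2)"
    unfolding f_def by (intro holomorphic_intros) (use not_nonpos in blast)
  moreover have "g holomorphic_on ball (of_nat n) (1/2)"
    unfolding g_def by (intro holomorphic_intros)
  moreover have "(g has_field_derivative (of_real pi * cos (of_real pi * of_nat n))) (at (of_nat n))"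
    unfolding g_def by (auto intro!: derivative_eq_intros)
  moreover have cos_n: "cos (of_real pi * of_nat n :: complex) = (-1) ^ n"
    by (simp flip: cos_of_real add: mult.commute)
  moreover have "f (of_nat n) \<noteq> 0" using assms by (simp add: f_def cos_n)
  moreover have "g (of_nat n) = 0" by (simp add: g_def sin_pi_times_eq_0_iff)
  ultimately have "residue (\<lambda>w. f w / g w) (of_nat n) = f (of_nat n) / (of_real pi * cos (of_real pi * of_nat n))"
    by (intro residue_simple_pole_deriv[OF _ _ open_ball connected_ball]) (use assms in auto)
  also have "\<dots> = of_nat n powr (-s) / pi"
    by (simp add: f_def cos_n)
  finally have "residue (\<lambda>w. f w / g w) (of_nat n) = of_nat n powr (-s) / pi" .
  moreover have "zeta_kernel s = (\<lambda>w. f w / g w)"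
    by (simp add: f_def g_def zeta_kernel_def cot_def fun_eq_iff)
  ultimately show ?thesis by simp
qed

lemma contour_integral_rectpath_zeta_kernel:
  assumes "0 < c" "c < 1" "1 \<le> N" "0 < T"
  shows "contour_integral (rectpath (Complex c (-T)) (Complex (c + real N) T)) (zeta_kernel s)
         = 2 * \<i> * (\<Sum>n=1..N. of_nat n powr (-s))"
proof -
  define S where "S = {z. 0 < Re z} \<inter> {z. Re z < real N + 1}"
  define poles where "poles = (of_nat ` {1..N} :: complex set)"
  define a where "a = Complex c (-T)"
  define b where "b = Complex (c + real N) T"
  have ab: "Re a \<le> Re b" "Im a \<le> Im b" using assms by (auto simp: a_def b_def)
  have box_S: "cbox a b \<subseteq> S" using assms by (auto simp: S_def a_def b_def in_cbox_complex_iff)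
  have poles_box: "poles \<subseteq> box a b"
    using assms by (auto simp: poles_def a_def b_def in_box_complex_iff)
  have "S - poles \<subseteq> {t. 0 < Re t} - \<int>"
  proof
    fix z assume z: "z \<in> S - poles"
    show "z \<in> {t. 0 < Re t} - \<int>"
    proof (rule ccontr)
      assume "z \<notin> {t. 0 < Re t} - \<int>"
      with z obtain m :: int where m: "z = of_int m" by (auto simp: S_def elim: Ints_cases)
      with z have "z = of_nat (nat m)" "nat m \<in> {1..N}" by (auto simp: S_def)
      with z show False by (auto simp: poles_def)
    qed
  qed
  then have holo: "zeta_kernel s holomorphic_on S - poles"
    using holomorphic_zeta_kernel holomorphic_on_subset by blast
  have "open S" "connected S" unfolding S_def
    by (intro open_Int open_halfspace_Re_gt open_halfspace_Re_lt convex_connected convex_Int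
        convex_halfspace_Re_gt convex_halfspace_Re_lt)+
  moreover have "path_image (rectpath a b) \<subseteq> S - poles"
    using path_image_rectpath_cbox_minus_box[OF ab] box_S poles_box by auto
  moreover have "\<forall>z. z \<notin> S \<longrightarrow> winding_number (rectpath a b) z = 0"
    using box_S ab by (auto intro!: winding_number_rectpath_outside)
  ultimately have "contour_integral (rectpath a b) (zeta_kernel s) =
      2 * pi * \<i> * (\<Sum>p\<in>poles. winding_number (rectpath a b) p * residue (zeta_kernel s) p)"
    by (intro Residue_theorem[OF _ _ _ holo valid_path_rectpath]) (auto simp: poles_def)
  also have "(\<Sum>p\<in>poles. winding_number (rectpath a b) p * residue (zeta_kernel s) p)
      = (\<Sum>n=1..N. residue (zeta_kernel s) (of_nat n))"
    using poles_box by (auto simp: poles_def sum.reindex inj_on_def winding_number_rectpath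
        intro!: sum.cong)
  also have "\<dots> = (\<Sum>n=1..N. of_nat n powr (-s) / pi)"
    by (intro sum.cong refl residue_zeta_kernel) auto
  finally show ?thesis by (simp add: a_def b_def flip: sum_divide_distrib)
qed

lemma norm_zeta_kernel_le:
  assumes "0 \<le> Re s" "0 < Re t" "norm (cot (of_real pi * t)) \<le> B" "0 < r" "r \<le> norm t"
  shows "norm (zeta_kernel s t) \<le> B * (exp (pi/2 * \<bar>Im s\<bar>) * r powr (- Re s))"
proof -
  have "norm (t powr (-s)) \<le> exp (pi/2 * \<bar>Im s\<bar>) * norm t powr (- Re s)"
    using norm_powr_le_Re_pos[OF assms(2), of "-s"] by simp
  also have "\<dots> \<le> exp (pi/2 * \<bar>Im s\<bar>) * r powr (- Re s)"
    using assms by (intro mult_left_mono powr_mono2') auto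
  finally show ?thesis
    unfolding zeta_kernel_def norm_mult using assms(3) by (subst mult.commute) (intro mult_mono; simp)
qed

lemma norm_zeta_kernel_vertical_le:
  assumes "0 \<le> Re s" "0 < c" "c < 1" "0 < r" "r \<le> max (c + real N) \<bar>y\<bar>"
  shows "norm (zeta_kernel s (Complex (c + real N) y))
         \<le> 1 / sin (pi * c) * (exp (pi/2 * \<bar>Im s\<bar>) * r powr (- Re s))"
proof (rule norm_zeta_kernel_le)
  define t where "t = Complex (c + real N) y"
  have sin_pos: "0 < sin (pi * c)" using assms by (intro sin_gt_zero) auto
  have "\<bar>sin (Re (of_real pi * t))\<bar> = \<bar>sin (pi * c + real N * pi)\<bar>"
    by (simp add: t_def algebra_simps)
  also have "\<dots> = sin (pi * c)" using sin_pos by (simp add: abs_sin_add_nat_times_pi)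
  finally show "norm (cot (of_real pi * t)) \<le> 1 / sin (pi * c)"
    using norm_cot_le_inverse_abs_sin_Re[of "of_real pi * t"] sin_pos by auto
  show "r \<le> norm t"
    using assms(5) complex_Re_le_cmod[of t] abs_Im_le_cmod[of t] by (simp add: t_def)
qed (use assms in simp_all)

lemma zeta_kernel_vertical_integrable:
  assumes "1 < Re s" "0 < c" "c < 1"
  shows "(\<lambda>y. zeta_kernel s (Complex (c + real N) y)) integrable_on UNIV"
    and "(\<lambda>m. integral {-real m..real m} (\<lambda>y. zeta_kernel s (Complex (c + real N) y)))
           \<longlonglongrightarrow> integral UNIV (\<lambda>y. zeta_kernel s (Complex (c + real N) y))"
proof -
  have "continuous_on UNIV (\<lambda>y. zeta_kernel s (Complex (c + real N) y))"
    by (rule continuous_on_zeta_kernel_vertical) (use assms add_of_nat_notin_Ints in auto)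
  moreover have "(\<lambda>y. 1 / sin (pi * c) * (exp (pi/2 * \<bar>Im s\<bar>) * max c \<bar>y\<bar> powr (- Re s)))
      integrable_on UNIV"
    using max_abs_powr_integrable[of c "- Re s"] assms by (intro integrable_on_mult_right) auto
  moreover have "norm (zeta_kernel s (Complex (c + real N) y))
      \<le> 1 / sin (pi * c) * (exp (pi/2 * \<bar>Im s\<bar>) * max c \<bar>y\<bar> powr (- Re s))" for y
    by (rule norm_zeta_kernel_vertical_le) (use assms in auto)
  ultimately show "(\<lambda>y. zeta_kernel s (Complex (c + real N) y)) integrable_on UNIV"
    and "(\<lambda>m. integral {-real m..real m} (\<lambda>y. zeta_kernel s (Complex (c + real N) y)))
           \<longlonglongrightarrow> integral UNIV (\<lambda>y. zeta_kernel s (Complex (c + real N) y))"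
    by (rule dominated_integral_symmetric_intervals_tendsto)+
qed

lemma norm_zeta_kernel_horizontal_le:
  assumes "0 \<le> Re s" "0 < Re t" "1 \<le> \<bar>Im t\<bar>"
  shows "norm (zeta_kernel s t) \<le> 2 * (exp (pi/2 * \<bar>Im s\<bar>) * \<bar>Im t\<bar> powr (- Re s))"
proof (rule norm_zeta_kernel_le)
  have "1 * 1 \<le> pi * \<bar>Im t\<bar>" using assms(3) pi_gt3 by (intro mult_mono) auto
  then show "norm (cot (of_real pi * t)) \<le> 2" by (intro norm_cot_le_2) (simp add: abs_mult)
qed (use assms abs_Im_le_cmod[of t] in auto)

lemma zeta_kernel_horizontal_segment:
  assumes "0 \<le> Re s" "0 < Re a" "0 < Re b" "Im a = Y" "Im b = Y" "1 \<le> \<bar>Y\<bar>"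
  shows "zeta_kernel s contour_integrable_on linepath a b"
    and "norm (contour_integral (linepath a b) (zeta_kernel s))
           \<le> 2 * (exp (pi/2 * \<bar>Im s\<bar>) * \<bar>Y\<bar> powr (- Re s)) * norm (b - a)"
proof -
  have seg: "0 < Re z" "Im z = Y" if "z \<in> closed_segment a b" for z
  proof -
    have "closed_segment a b \<subseteq> {z. 0 < Re z}"
      using assms by (intro closed_segment_subset convex_halfspace_Re_gt) auto
    then show "0 < Re z" using that by auto
    show "Im z = Y" using that assms by (auto simp: closed_segment_same_Im)
  qed
  have "z \<notin> \<int>" if "z \<in> closed_segment a b" for z
    using seg(2)[OF that] assms(6) by (auto elim!: Ints_cases)
  then have "closed_segment a b \<subseteq> {t. 0 < Re t} - \<int>"
    using seg(1) by blast
  then show integrable: "zeta_kernel s contour_integrable_on linepath a b"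
    by (rule contour_integrable_zeta_kernel_linepath)
  show "norm (contour_integral (linepath a b) (zeta_kernel s))
          \<le> 2 * (exp (pi/2 * \<bar>Im s\<bar>) * \<bar>Y\<bar> powr (- Re s)) * norm (b - a)"
    using norm_zeta_kernel_horizontal_le[OF assms(1)] seg assms(6)
    by (intro contour_integral_bound_linepath[OF integrable]) auto
qed

lemma contour_integral_horizontal_tendsto_0:
  assumes "1 < Re s" "0 < x" "0 < x'" "\<And>m. \<bar>Y m\<bar> = real m"
  shows "(\<lambda>m. contour_integral (linepath (Complex x (Y m)) (Complex x' (Y m))) (zeta_kernel s)) \<longlonglongrightarrow> 0"
proof (rule Lim_null_comparison)
  let ?bound = "\<lambda>m. 2 * (exp (pi/2 * \<bar>Im s\<bar>) * real m powr (- Re s)) * \<bar>x' - x\<bar>"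
  show "\<forall>\<^sub>F m in sequentially.
          norm (contour_integral (linepath (Complex x (Y m)) (Complex x' (Y m))) (zeta_kernel s)) \<le> ?bound m"
    unfolding eventually_sequentially
    using zeta_kernel_horizontal_segment(2)[of s "Complex x (Y _)" "Complex x' (Y _)"] assms
    by (intro exI[of _ 1]) (auto simp: cmod_def)
  have "(\<lambda>m::nat. real m powr (- Re s)) \<longlonglongrightarrow> 0"
    by (rule tendsto_neg_powr) (use assms filterlim_real_sequentially in auto)
  then show "?bound \<longlonglongrightarrow> 0"
    by (intro tendsto_mult_left_zero tendsto_mult_right_zero)
qed

lemma contour_integral_rectpath_zeta_kernel_sides:
  fixes N :: nat
  assumes "0 \<le> Re s" "0 < c" "c < 1" "1 \<le> T"
  defines "a \<equiv> Complex c (-T)" and "b \<equiv> Complex (c + real N) (-T)"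
      and "b' \<equiv> Complex (c + real N) T" and "a' \<equiv> Complex c T"
  shows "contour_integral (rectpath a b') (zeta_kernel s) =
           contour_integral (linepath a b) (zeta_kernel s)
         + \<i> * integral {-T..T} (\<lambda>y. zeta_kernel s (Complex (c + real N) y))
         + contour_integral (linepath b' a') (zeta_kernel s)
         - \<i> * integral {-T..T} (\<lambda>y. zeta_kernel s (Complex c y))"
proof -
  have c: "c \<notin> \<int>" "c + real N \<notin> \<int>"
    using add_of_nat_notin_Ints[OF assms(2,3), of 0] add_of_nat_notin_Ints[OF assms(2,3), of N] by simp_all
  have integrable: "zeta_kernel s contour_integrable_on linepath a b"
      "zeta_kernel s contour_integrable_on linepath b b'"
      "zeta_kernel s contour_integrable_on linepath b' a'"
      "zeta_kernel s contour_integrable_on linepath a' a"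
  proof -
    show "zeta_kernel s contour_integrable_on linepath a b"
      by (rule zeta_kernel_horizontal_segment(1)[OF assms(1), of _ _ "-T"])
        (use assms in \<open>simp_all add: a_def b_def\<close>)
    show "zeta_kernel s contour_integrable_on linepath b' a'"
      by (rule zeta_kernel_horizontal_segment(1)[OF assms(1), of _ _ "T"])
        (use assms in \<open>simp_all add: a'_def b'_def\<close>)
    show "zeta_kernel s contour_integrable_on linepath b b'"
      by (rule contour_integrable_zeta_kernel_vertical_segment[of "c + real N"])
        (use assms c in \<open>simp_all add: b_def b'_def\<close>)
    show "zeta_kernel s contour_integrable_on linepath a' a"
      by (rule contour_integrable_zeta_kernel_vertical_segment[of c])
        (use assms c in \<open>simp_all add: a_def a'_def\<close>)
  qed
  have "contour_integral (rectpath a b') (zeta_kernel s) =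
          contour_integral (linepath a b) (zeta_kernel s) + contour_integral (linepath b b') (zeta_kernel s)
        + contour_integral (linepath b' a') (zeta_kernel s) + contour_integral (linepath a' a) (zeta_kernel s)"
    using integrable by (simp add: rectpath_def Let_def a_def b_def a'_def b'_def add_ac)
  also have "contour_integral (linepath b b') (zeta_kernel s)
      = \<i> * integral {-T..T} (\<lambda>y. zeta_kernel s (Complex (c + real N) y))"
    by (rule contour_integral_linepath_same_Re) (use assms in \<open>auto simp: b_def b'_def\<close>)
  also have "contour_integral (linepath a' a) (zeta_kernel s)
      = - contour_integral (linepath a a') (zeta_kernel s)"
    using integrable(4) contour_integral_reversepath[of "linepath a' a"] by simp
  also have "contour_integral (linepath a a') (zeta_kernel s)
      = \<i> * integral {-T..T} (\<lambda>y. zeta_kernel s (Complex c y))"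
    by (rule contour_integral_linepath_same_Re) (use assms in \<open>auto simp: a_def a'_def\<close>)
  finally show ?thesis by simp
qed

lemma integral_vertical_zeta_kernel_shift:
  assumes "1 < Re s" "0 < c" "c < 1" "1 \<le> N"
  shows "integral UNIV (\<lambda>y. zeta_kernel s (Complex c y)) =
         integral UNIV (\<lambda>y. zeta_kernel s (Complex (c + real N) y)) - 2 * (\<Sum>n=1..N. of_nat n powr (-s))"
proof -
  define V where "V x m = integral {-real m..real m} (\<lambda>y. zeta_kernel s (Complex x y))" for x m
  define J where "J x = integral UNIV (\<lambda>y. zeta_kernel s (Complex x y))" for x
  define bottom where "bottom m =
    contour_integral (linepath (Complex c (-real m)) (Complex (c + real N) (-real m))) (zeta_kernel s)" for m
  define top where "top m =
    contour_integral (linepath (Complex (c + real N) (real m)) (Complex c (real m))) (zeta_kernel s)" for m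
  define S where "S = (\<Sum>n=1..N. of_nat n powr (-s) :: complex)"
  have "bottom m + \<i> * V (c + real N) m + top m - \<i> * V c m = 2 * \<i> * S" if "1 \<le> m" for m
    using contour_integral_rectpath_zeta_kernel_sides[of s c "real m" N]
      contour_integral_rectpath_zeta_kernel[OF assms(2-4), of "real m" s] assms that
    by (simp add: bottom_def top_def V_def S_def)
  then have lim_rect: "(\<lambda>m. bottom m + \<i> * V (c + real N) m + top m - \<i> * V c m) \<longlonglongrightarrow> 2 * \<i> * S"
    by (intro tendsto_eventually) (auto simp: eventually_sequentially)
  have lim_sides: "(\<lambda>m. bottom m + \<i> * V (c + real N) m + top m - \<i> * V c m)
      \<longlonglongrightarrow> 0 + \<i> * J (c + real N) + 0 - \<i> * J c"
  proof (intro tendsto_intros)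
    show "bottom \<longlonglongrightarrow> 0" "top \<longlonglongrightarrow> 0"
      unfolding bottom_def top_def
      by (rule contour_integral_horizontal_tendsto_0; use assms in simp)+
    show "(\<lambda>m. V (c + real N) m) \<longlonglongrightarrow> J (c + real N)"
      unfolding V_def J_def by (rule zeta_kernel_vertical_integrable(2)[OF assms(1-3)])
    show "(\<lambda>m. V c m) \<longlonglongrightarrow> J c"
      using zeta_kernel_vertical_integrable(2)[OF assms(1-3), of 0] by (simp add: V_def J_def)
  qed
  from LIMSEQ_unique[OF lim_sides lim_rect] have "\<i> * (J c - (J (c + real N) - 2 * S)) = 0"
    by (simp add: algebra_simps)
  then show ?thesis by (simp add: J_def S_def)
qed

lemma integral_vertical_zeta_kernel_tendsto_0:
  assumes "1 < Re s" "0 < c" "c < 1"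
  shows "(\<lambda>N. integral UNIV (\<lambda>y. zeta_kernel s (Complex (c + real N) y))) \<longlonglongrightarrow> 0"
proof -
  define C where "C = 1 / sin (pi * c) * exp (pi/2 * \<bar>Im s\<bar>)"
  define f where "f N y = zeta_kernel s (Complex (c + real N) y)" for N y
  have integrable: "f N integrable_on UNIV" for N
    unfolding f_def by (rule zeta_kernel_vertical_integrable(1)[OF assms])
  have majorant: "(\<lambda>y. C * max c \<bar>y\<bar> powr (- Re s)) integrable_on UNIV"
    using max_abs_powr_integrable[of c "- Re s"] assms by (intro integrable_on_mult_right) auto
  have dominated: "norm (f N y) \<le> C * max c \<bar>y\<bar> powr (- Re s)" for N y
    using norm_zeta_kernel_vertical_le[of s c "max c \<bar>y\<bar>" N y] assms
    by (simp add: C_def f_def mult.assoc)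
  have pointwise: "(\<lambda>N. f N y) \<longlonglongrightarrow> 0" for y
  proof (rule Lim_null_comparison)
    show "\<forall>\<^sub>F N in sequentially. norm (f N y) \<le> C * (c + real N) powr (- Re s)"
      using norm_zeta_kernel_vertical_le[of s c "c + real _" _ y] assms
      by (intro always_eventually allI) (simp add: C_def f_def mult.assoc)
    have "filterlim (\<lambda>N::nat. c + real N) at_top sequentially"
      by (rule filterlim_tendsto_add_at_top[OF tendsto_const filterlim_real_sequentially])
    then show "(\<lambda>N. C * (c + real N) powr (- Re s)) \<longlonglongrightarrow> 0"
      by (intro tendsto_mult_right_zero tendsto_neg_powr) (use assms in auto)
  qed
  have "(\<lambda>N. integral UNIV (f N)) \<longlonglongrightarrow> 0"
    using dominated_convergence(2)[OF integrable majorant dominated pointwise] by simp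
  then show ?thesis by (simp add: f_def[abs_def])
qed

lemma partial_sums_tendsto_riemann_zeta:
  assumes "1 < Re s"
  shows "(\<lambda>N. \<Sum>n=1..N. of_nat n powr (-s)) \<longlonglongrightarrow> riemann_zeta s"
proof -
  have "summable (\<lambda>n. exp (of_real (ln (of_nat n)) * (-s)))"
    by (rule summable_complex_powr_iff) (use assms in simp)
  then have "summable (\<lambda>n. exp (of_real (ln (of_nat (n + 1))) * (-s)))"
    by (rule summable_ignore_initial_segment)
  moreover have "exp (of_real (ln (of_nat (n + 1))) * (-s)) = 1 / of_nat (Suc n) powr s" for n
    by (simp add: powr_def exp_minus field_simps del: of_nat_Suc)
  ultimately have "(\<lambda>N. \<Sum>k<N. 1 / of_nat (Suc k) powr s) \<longlonglongrightarrow> riemann_zeta s"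
    unfolding riemann_zeta_def by (intro summable_LIMSEQ) simp
  moreover have "(\<Sum>k<N. 1 / of_nat (Suc k) powr s) = (\<Sum>n=1..N. of_nat n powr (-s))" for N
    by (simp add: sum.atLeast1_atMost_eq powr_minus divide_inverse)
  ultimately show ?thesis by simp
qed

theorem mainTheorem1:
  fixes s :: complex and c :: real
  assumes "Re s > 1" and "0 < c" and "c < 1"
  shows "(\<lambda>y::real. (Complex c y) powr (-s) * cot (of_real pi * Complex c y)) integrable_on UNIV
    \<and> riemann_zeta s = (\<i> / 2) * vertical_line_integral c (\<lambda>t. t powr (-s) * cot (of_real pi * t))
    \<and> riemann_zeta s = - (1 / 2) * integral UNIV (\<lambda>y::real. (Complex c y) powr (-s) * cot (of_real pi * Complex c y))"
proof -
  define J where "J = integral UNIV (\<lambda>y. zeta_kernel s (Complex c y))"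
  have "(\<lambda>N. integral UNIV (\<lambda>y. zeta_kernel s (Complex (c + real (Suc N)) y))
          - 2 * (\<Sum>n=1..Suc N. of_nat n powr (-s))) \<longlonglongrightarrow> 0 - 2 * riemann_zeta s"
    using integral_vertical_zeta_kernel_tendsto_0[OF assms] partial_sums_tendsto_riemann_zeta[OF assms(1)]
    by (intro tendsto_intros LIMSEQ_Suc)
  moreover have "integral UNIV (\<lambda>y. zeta_kernel s (Complex (c + real (Suc N)) y))
          - 2 * (\<Sum>n=1..Suc N. of_nat n powr (-s)) = J" for N
    using integral_vertical_zeta_kernel_shift[OF assms, of "Suc N"] by (simp add: J_def)
  ultimately have "J = - 2 * riemann_zeta s"
    by (simp add: LIMSEQ_const_iff)
  moreover have "(\<lambda>y. zeta_kernel s (Complex c y)) integrable_on UNIV"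
    using zeta_kernel_vertical_integrable(1)[OF assms, of 0] by simp
  ultimately show ?thesis
    by (simp add: J_def vertical_line_integral_def zeta_kernel_def[abs_def])
qed

end
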